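(* Let $0\le p_1<1/2<p_2\le 1$ and $c=\min\{1/2-p_1,\,p_2-1/2\}$. Let $\ell\ge 7$ be an integer with $\ell\ge (1/c^2)\ln(\ell+1)$. Then $|\mathbf{G}(\ell+1,[p_1\ell,p_2\ell])|\le 2^{\ell-3}$, and moreover there exists an injective map $\Psi:\mathbf{G}(\ell+1,[p_1\ell,p_2\ell])\to \mathcal{W}(\ell-2,\ell-2,[p_1(\ell-2),p_2(\ell-2)])$.
   Context: $\mathrm{wt}(\mathbf{x})$ denotes the number of ones of a binary sequence $\mathbf{x}$. $\mathbf{G}(\ell+1,[p_1\ell,p_2\ell])$ is the set of all $\mathbf{x}=x_1\dots x_{\ell+1}\in\{0,1\}^{\ell+1}$ such that at least one of the two windows $x_1\dots x_\ell$, $x_2\dots x_{\ell+1}$ has weight outside $[p_1\ell,p_2\ell]$. For reals $a\le b$ and $L\le n$, $\mathcal{W}(n,L,[a,b])$ is the set of $\mathbf{x}\in\{0,1\}^n$ all of whose length-$L$ windows $x_i\dots x_{i+L-1}$ have weight in $[a,b]$; thus $\mathcal{W}(\ell-2,\ell-2,[p_1(\ell-2),p_2(\ell-2)])$ is the set of sequences in $\{0,1\}^{\ell-2}$ with weight in $[p_1(\ell-2),p_2(\ell-2)]$. $\ln$ is the natural logarithm. *)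

theory Defs
  imports Complex_Main
begin

text \<open>Binary sequences are lists over bool (True = 1).\<close>

definition wt :: "bool list \<Rightarrow> nat" where
  "wt x = length (filter id x)"

text \<open>Sequences of length n all of whose length-L windows x_i..x_{i+L-1}
  (i = 1..n-L+1, here 0-based i = 0..n-L) have weight in [a,b].\<close>
definition W :: "nat \<Rightarrow> nat \<Rightarrow> real \<Rightarrow> real \<Rightarrow> bool list set" where
  "W n L a b = {x. length x = n \<and>
      (\<forall>i. i + L \<le> n \<longrightarrow> a \<le> real (wt (take L (drop i x))) \<and> real (wt (take L (drop i x))) \<le> b)}"

text \<open>G(l+1,[a,b]): sequences of length l+1 such that at least one of the two
  windows x_1..x_l, x_2..x_{l+1} has weight outside [a,b].\<close>
definition G :: "nat \<Rightarrow> real \<Rightarrow> real \<Rightarrow> bool list set" where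
  "G l a b = {x. length x = l + 1 \<and>
      (\<not> (a \<le> real (wt (take l x)) \<and> real (wt (take l x)) \<le> b) \<or>
       \<not> (a \<le> real (wt (drop 1 x)) \<and> real (wt (drop 1 x)) \<le> b))}"

end

theory Submission
  imports Defs "HOL-Probability.Probability"
begin

text \<open>Every word of G is a word of length l whose weight lies outside the window, extended by one
  bit at the front or at the back; hence |G| is at most four times the number of such words.
  Since the window contains [(1/2 - c) l, (1/2 + c) l], Hoeffding's inequality for the fair
  binomial distribution bounds that number by 2^l * 2 exp(-2 c^2 l) <= 2^l / 32, using
  exp(2 c^2 l) >= (l + 1)^2 >= 64. This gives |G| <= 2^(l-3). The same inequality for words of
  length l - 2 shows that at least half of them have weight in the window, so
  |W| >= 2^(l-3) >= |G| and an injection exists by counting.\<close>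

lemma finite_bool_lists_length: "finite {y::bool list. length y = n \<and> P y}"
  by (rule rev_finite_subset[OF finite_lists_length_eq[of "UNIV::bool set" n]]) auto

lemma card_bool_lists_length: "card {y::bool list. length y = n} = 2 ^ n"
  using card_lists_length_eq[of "UNIV::bool set" n] by simp

lemma card_bool_lists_length_wt:
  "card {y::bool list. length y = n \<and> wt y = k} = n choose k"
proof -
  let ?support = "\<lambda>y::bool list. {i. i < length y \<and> y ! i}"
  let ?word = "\<lambda>S. map (\<lambda>i. i \<in> S) [0..<n]"
  have "bij_betw ?support {y. length y = n \<and> wt y = k} {S. S \<subseteq> {..<n} \<and> card S = k}"
  proof (rule bij_betw_byWitness[where f' = ?word])
    have "?support (?word S) = S" if "S \<subseteq> {..<n}" for S
      using that by auto
    then show "?word ` {S. S \<subseteq> {..<n} \<and> card S = k} \<subseteq> {y. length y = n \<and> wt y = k}"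
      by (auto simp: wt_def length_filter_conv_card)
  qed (auto simp: wt_def length_filter_conv_card intro!: nth_equalityI)
  then show ?thesis
    by (simp add: bij_betw_same_card n_subsets)
qed

lemma card_bool_lists_length_wt_sum:
  "real (card {y::bool list. length y = n \<and> P (wt y)}) = (\<Sum>k | k \<le> n \<and> P k. real (n choose k))"
proof -
  let ?A = "{y::bool list. length y = n \<and> P (wt y)}"
  have "real (card ?A) = (\<Sum>y \<in> ?A. 1)"
    by simp
  also have "\<dots> = (\<Sum>k | k \<le> n \<and> P k. \<Sum>y \<in> {y \<in> ?A. wt y = k}. 1)"
    by (rule sum.group[symmetric]) (auto simp: finite_bool_lists_length wt_def)
  also have "\<dots> = (\<Sum>k | k \<le> n \<and> P k. real (n choose k))"
  proof (rule sum.cong)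
    fix k assume "k \<in> {k. k \<le> n \<and> P k}"
    then have "{y \<in> ?A. wt y = k} = {y. length y = n \<and> wt y = k}" by auto
    then show "(\<Sum>y \<in> {y \<in> ?A. wt y = k}. 1) = real (n choose k)"
      by (simp add: card_bool_lists_length_wt)
  qed simp
  finally show ?thesis .
qed

lemma prob_binomial_pmf_half:
  "measure_pmf.prob (binomial_pmf n (1/2)) {k. P k} = (\<Sum>k | k \<le> n \<and> P k. real (n choose k)) / 2 ^ n"
proof -
  have "measure_pmf.prob (binomial_pmf n (1/2)) {k. P k}
      = measure_pmf.prob (binomial_pmf n (1/2)) {k. k \<le> n \<and> P k}"
    by (subst measure_Int_set_pmf[symmetric]) (auto simp: set_pmf_binomial Int_def conj_commute)
  also have "\<dots> = (\<Sum>k | k \<le> n \<and> P k. pmf (binomial_pmf n (1/2)) k)"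
    by (rule measure_measure_pmf_finite) auto
  also have "\<dots> = (\<Sum>k | k \<le> n \<and> P k. real (n choose k) / 2 ^ n)"
  proof (rule sum.cong)
    fix k assume "k \<in> {k. k \<le> n \<and> P k}"
    then have "(1/2::real) ^ k * (1 - 1/2) ^ (n - k) = 1 / 2 ^ n"
      by (simp add: power_add[symmetric] power_one_over)
    then show "pmf (binomial_pmf n (1/2)) k = real (n choose k) / 2 ^ n"
      by (simp add: pmf_binomial mult.assoc)
  qed simp
  finally show ?thesis
    by (simp add: sum_divide_distrib)
qed

lemma card_wt_far_from_half_le:
  assumes "n > 0" "t \<ge> 0"
  shows "real (card {y::bool list. length y = n \<and> t \<le> \<bar>real (wt y) - real n / 2\<bar>})
           \<le> 2 ^ n * (2 * exp (- 2 * t\<^sup>2 / real n))"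
proof -
  have "binomial_distribution (1/2)"
    by unfold_locales auto
  from binomial_distribution.prob_abs_ge[OF this assms]
  have "(\<Sum>k | k \<le> n \<and> t \<le> \<bar>real k - real n / 2\<bar>. real (n choose k)) / 2 ^ n
          \<le> 2 * exp (- 2 * t\<^sup>2 / real n)"
    by (simp add: prob_binomial_pmf_half)
  then show ?thesis
    unfolding card_bool_lists_length_wt_sum[of n "\<lambda>k. t \<le> \<bar>real k - real n / 2\<bar>"]
    by (simp add: field_simps)
qed

definition wt_outside :: "nat \<Rightarrow> real \<Rightarrow> real \<Rightarrow> bool list set" where
  "wt_outside n a b = {y. length y = n \<and> \<not> (a \<le> real (wt y) \<and> real (wt y) \<le> b)}"

lemma finite_wt_outside: "finite (wt_outside n a b)"
  unfolding wt_outside_def by (rule finite_bool_lists_length)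

lemma card_wt_outside_le:
  assumes "n > 0" "c \<ge> 0" "p1 \<le> 1/2 - c" "1/2 + c \<le> p2"
  shows "real (card (wt_outside n (p1 * real n) (p2 * real n))) \<le> 2 ^ n * (2 * exp (- 2 * c\<^sup>2 * real n))"
proof -
  let ?far = "{y::bool list. length y = n \<and> c * real n \<le> \<bar>real (wt y) - real n / 2\<bar>}"
  have "p1 * real n \<le> (1/2 - c) * real n" "(1/2 + c) * real n \<le> p2 * real n"
    using assms by (simp_all add: mult_right_mono)
  then have "wt_outside n (p1 * real n) (p2 * real n) \<subseteq> ?far"
    by (auto simp: wt_outside_def field_simps)
  then have "real (card (wt_outside n (p1 * real n) (p2 * real n))) \<le> real (card ?far)"
    by (intro of_nat_mono card_mono finite_bool_lists_length)
  also have "\<dots> \<le> 2 ^ n * (2 * exp (- 2 * (c * real n)\<^sup>2 / real n))"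
    using assms by (intro card_wt_far_from_half_le) auto
  also have "- 2 * (c * real n)\<^sup>2 / real n = - 2 * c\<^sup>2 * real n"
    using assms by (simp add: power2_eq_square)
  finally show ?thesis .
qed

lemma G_subset_extensions:
  "G l a b \<subseteq> (\<lambda>(y, e). y @ [e]) ` (wt_outside l a b \<times> UNIV) \<union> (\<lambda>(e, y). e # y) ` (UNIV \<times> wt_outside l a b)"
proof
  fix x assume x: "x \<in> G l a b"
  then have len: "length x = l + 1"
    by (simp add: G_def)
  show "x \<in> (\<lambda>(y, e). y @ [e]) ` (wt_outside l a b \<times> UNIV) \<union> (\<lambda>(e, y). e # y) ` (UNIV \<times> wt_outside l a b)"
  proof (cases "take l x \<in> wt_outside l a b")
    case True
    moreover have "x = take l x @ [last x]"
      using len by (metis append_butlast_last_id butlast_conv_take diff_add_inverse2 list.size(3)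
          nat.distinct(1) Suc_eq_plus1)
    ultimately show ?thesis
      by (metis (no_types, lifting) UNIV_I UnI1 case_prod_conv image_eqI mem_Sigma_iff)
  next
    case False
    with x len have "drop 1 x \<in> wt_outside l a b"
      by (simp add: G_def wt_outside_def)
    moreover have "x = hd x # drop 1 x"
      using len by (cases x) auto
    ultimately show ?thesis
      by (metis (no_types, lifting) UNIV_I UnI2 case_prod_conv image_eqI mem_Sigma_iff)
  qed
qed

lemma card_G_le: "card (G l a b) \<le> 4 * card (wt_outside l a b)"
proof -
  let ?B = "wt_outside l a b"
  have "card (G l a b) \<le> card ((\<lambda>(y, e). y @ [e]) ` (?B \<times> UNIV) \<union> (\<lambda>(e, y). e # y) ` (UNIV \<times> ?B))"
    by (intro card_mono G_subset_extensions) (simp add: finite_wt_outside)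
  also have "\<dots> \<le> card (?B \<times> (UNIV::bool set)) + card ((UNIV::bool set) \<times> ?B)"
    by (intro order_trans[OF card_Un_le] add_mono card_image_le) (simp_all add: finite_wt_outside)
  also have "\<dots> = 4 * card ?B"
    by (simp add: card_cartesian_product)
  finally show ?thesis .
qed

lemma card_G_le_pow:
  assumes "l \<ge> 3" "c \<ge> 0" "p1 \<le> 1/2 - c" "1/2 + c \<le> p2" "exp (- 2 * c\<^sup>2 * real l) \<le> 1/64"
  shows "card (G l (p1 * real l) (p2 * real l)) \<le> 2 ^ (l - 3)"
proof -
  have "real (card (G l (p1 * real l) (p2 * real l)))
          \<le> 4 * real (card (wt_outside l (p1 * real l) (p2 * real l)))"
    using card_G_le[of l "p1 * real l" "p2 * real l"] by (metis of_nat_le_iff of_nat_mult of_nat_numeral)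
  also have "\<dots> \<le> 4 * (2 ^ l * (2 * exp (- 2 * c\<^sup>2 * real l)))"
    using card_wt_outside_le[of l c p1 p2] assms(1-4) by simp
  also have "\<dots> \<le> 4 * (2 ^ l * (2 * (1/64)))"
    using assms(5) by (intro mult_left_mono) auto
  also have "(2::real) ^ l = 2 ^ (l - 3) * 8"
    using assms(1) power_add[of "2::real" "l - 3" 3] by simp
  finally show ?thesis
    by (simp flip: of_nat_le_iff)
qed

lemma finite_G: "finite (G l a b)"
  by (rule rev_finite_subset[OF _ G_subset_extensions]) (simp add: finite_wt_outside)

lemma W_single_window: "W n n a b = {x. length x = n \<and> a \<le> real (wt x) \<and> real (wt x) \<le> b}"
  unfolding W_def by (auto dest: spec[of _ 0])

lemma card_W_single_window_ge_half:
  assumes "n > 0" "c \<ge> 0" "p1 \<le> 1/2 - c" "1/2 + c \<le> p2" "exp (- 2 * c\<^sup>2 * real n) \<le> 1/4"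
  shows "2 ^ n \<le> 2 * card (W n n (p1 * real n) (p2 * real n))"
proof -
  let ?W = "W n n (p1 * real n) (p2 * real n)" and ?B = "wt_outside n (p1 * real n) (p2 * real n)"
  have "{x::bool list. length x = n} \<subseteq> ?W \<union> ?B"
    by (auto simp: W_single_window wt_outside_def)
  then have "card {x::bool list. length x = n} \<le> card (?W \<union> ?B)"
    by (intro card_mono) (auto simp: W_single_window finite_bool_lists_length finite_wt_outside)
  then have "2 ^ n \<le> card ?W + card ?B"
    unfolding card_bool_lists_length using card_Un_le[of ?W ?B] by linarith
  then have "(2::real) ^ n \<le> real (card ?W) + real (card ?B)"
    by (metis of_nat_add of_nat_le_iff of_nat_numeral of_nat_power)
  also have "real (card ?B) \<le> 2 ^ n * (2 * exp (- 2 * c\<^sup>2 * real n))"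
    using assms(1-4) by (rule card_wt_outside_le)
  also have "\<dots> \<le> 2 ^ n * (2 * (1/4))"
    using assms(5) by (intro mult_left_mono) auto
  finally have "(2::real) ^ n \<le> 2 * real (card ?W)"
    by simp
  then show ?thesis
    by (metis of_nat_le_iff of_nat_mult of_nat_numeral of_nat_power)
qed

lemma finite_W_single_window: "finite (W n n a b)"
  unfolding W_single_window by (rule finite_bool_lists_length)

lemma exp_minus_le_inverse:
  fixes a x :: real
  assumes "a > 0" "a \<le> exp x"
  shows "exp (- x) \<le> 1 / a"
  using le_imp_inverse_le[OF assms(2,1)] by (simp add: exp_minus inverse_eq_divide)

lemma square_le_exp_of_ln_le:
  fixes x s :: real
  assumes "x > 0" "ln x \<le> s"
  shows "x\<^sup>2 \<le> exp (2 * s)"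
proof -
  have "x\<^sup>2 = exp (2 * ln x)"
    using assms(1) by (simp add: exp_double exp_ln)
  also have "\<dots> \<le> exp (2 * s)"
    using assms(2) by simp
  finally show ?thesis .
qed

lemma exp_bounds_of_ln_le:
  fixes c :: real and l :: nat
  assumes "l \<ge> 7" "c\<^sup>2 \<le> 1/4" "ln (real l + 1) \<le> c\<^sup>2 * real l"
  shows "exp (- 2 * c\<^sup>2 * real l) \<le> 1/64" "exp (- 2 * c\<^sup>2 * real (l - 2)) \<le> 1/4"
proof -
  have "(8::real)\<^sup>2 \<le> (real l + 1)\<^sup>2"
    using assms(1) by (intro power_mono) auto
  also have "\<dots> \<le> exp (2 * (c\<^sup>2 * real l))"
    using assms(3) by (intro square_le_exp_of_ln_le) auto
  finally show "exp (- 2 * c\<^sup>2 * real l) \<le> 1/64"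
    using exp_minus_le_inverse[of 64 "2 * (c\<^sup>2 * real l)"] by (simp add: mult.assoc)
  have "exp 1 \<le> real l + 1"
    using exp_le assms(1) by linarith
  then have "1 \<le> ln (real l + 1)"
    using ln_ge_iff by auto
  moreover have "ln 4 \<le> ln (real l + 1)"
    using assms(1) by simp
  moreover have "2 * c\<^sup>2 * real (l - 2) = 2 * (c\<^sup>2 * real l) - 4 * c\<^sup>2"
    using assms(1) by (simp add: of_nat_diff algebra_simps)
  ultimately have "ln 4 \<le> 2 * c\<^sup>2 * real (l - 2)"
    using assms(2,3) by linarith
  then have "4 \<le> exp (2 * c\<^sup>2 * real (l - 2))"
    by (metis exp_le_cancel_iff exp_ln zero_less_numeral)
  then show "exp (- 2 * c\<^sup>2 * real (l - 2)) \<le> 1/4"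
    using exp_minus_le_inverse[of 4] by simp
qed

theorem theorem6:
  fixes p1 p2 c :: real and l :: nat
  assumes "0 \<le> p1" "p1 < 1/2" "1/2 < p2" "p2 \<le> 1"
    and "c = min (1/2 - p1) (p2 - 1/2)"
    and "l \<ge> 7"
    and "real l \<ge> (1 / c^2) * ln (real l + 1)"
  shows "card (G l (p1 * real l) (p2 * real l)) \<le> 2 ^ (l - 3)
    \<and> (\<exists>\<Psi>. inj_on \<Psi> (G l (p1 * real l) (p2 * real l)) \<and>
          \<Psi> ` (G l (p1 * real l) (p2 * real l))
            \<subseteq> W (l - 2) (l - 2) (p1 * (real l - 2)) (p2 * (real l - 2)))"
proof -
  let ?G = "G l (p1 * real l) (p2 * real l)"
  define m where "m = l - 2"
  have c: "c > 0" "c \<le> 1/2" "p1 \<le> 1/2 - c" "1/2 + c \<le> p2"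
    using assms(1-5) by (auto simp: min_def)
  then have "c\<^sup>2 \<le> 1/4"
    using power_mono[of c "1/2" 2] by (simp add: power_divide)
  moreover have "ln (real l + 1) \<le> c\<^sup>2 * real l"
    using assms(7) c(1) by (simp add: field_simps)
  ultimately have exp_bounds: "exp (- 2 * c\<^sup>2 * real l) \<le> 1/64" "exp (- 2 * c\<^sup>2 * real m) \<le> 1/4"
    using exp_bounds_of_ln_le assms(6) unfolding m_def by blast+
  have card_G: "card ?G \<le> 2 ^ (l - 3)"
    using card_G_le_pow[of l c p1 p2] exp_bounds(1) assms(6) c by simp
  have "m = Suc (l - 3)"
    using assms(6) by (simp add: m_def)
  with card_W_single_window_ge_half[of m c p1 p2] have "2 ^ (l - 3) \<le> card (W m m (p1 * real m) (p2 * real m))"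
    using exp_bounds(2) c by simp
  then obtain \<Psi> where "inj_on \<Psi> ?G" "\<Psi> ` ?G \<subseteq> W m m (p1 * real m) (p2 * real m)"
    using card_le_inj[OF finite_G finite_W_single_window] card_G le_trans by blast
  moreover have "real m = real l - 2"
    using assms(6) by (simp add: m_def)
  ultimately show ?thesis
    using card_G unfolding m_def by (metis (no_types, lifting))
qed

end
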